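(* Fix $\theta$ in the interior of $\Theta$ and suppose $\theta'\mapsto\lambda(\theta')$ is differentiable at $\theta$, so that $\nabla_\theta V(\theta;z)$ exists for every $z\in\mathbb{R}^{SA}$. Let $F:\mathbb{R}^{SA}\to\mathbb{R}\cup\{-\infty\}$ be a proper, upper semicontinuous, concave function that is finite and continuously differentiable on an open neighborhood of $\lambda(\theta)$. Then $\theta\mapsto R(\pi_\theta)$ is differentiable at $\theta$ and $$\nabla_\theta R(\pi_\theta)=\lim_{\delta\to0_+}\ \operatorname*{argmax}_{x\in\mathbb{R}^d}\ \inf_{z\in\mathbb{R}^{SA}}\Big\{V(\theta;z)+\delta\,\nabla_\theta V(\theta;z)^\top x-F^*(z)-\tfrac{\delta}{2}\|x\|^2\Big\}.$$
   Context: Finite MDP: finite state space $\mathcal S$ with $S=|\mathcal S|$, finite action space $\mathcal A$ with $A=|\mathcal A|$, transition probabilities $P_a(i,j)$ of moving from state $i$ to state $j$ under action $a$, initial state distribution $\xi$ on $\mathcal S$, discount factor $\gamma\in(0,1)$. A (stationary) policy $\pi$ assigns to each state $s$ a distribution $\pi(\cdot|s)$ on $\mathcal A$. The state-action occupancy measure of $\pi$ is $\lambda^\pi\in\mathbb{R}^{SA}$, $\lambda^\pi_{sa}=\sum_{t=0}^\infty\gamma^t\,\mathbb P(s_t=s,a_t=a\mid \pi, s_0\sim\xi)$, where $a_t\sim\pi(\cdot|s_t)$ and $s_{t+1}\sim P_{a_t}(s_t,\cdot)$. Policies are parametrized as $\pi_\theta$, $\theta\in\Theta\subset\mathbb{R}^d$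 with $\Theta$ convex; write $\lambda(\theta):=\lambda^{\pi_\theta}$. For a concave utility $F$, the objective is $R(\pi_\theta):=F(\lambda(\theta))$. For $z\in\mathbb{R}^{SA}$ (viewed as a reward function), $V(\theta;z):=\langle z,\lambda(\theta)\rangle=\mathbb E^{\pi_\theta}[\sum_t\gamma^t z_{s_ta_t}]$ is the cumulative discounted value of $\pi_\theta$ under reward $z$. The (concave) Fenchel dual is $F^*(z):=\inf_\lambda\{\langle\lambda,z\rangle-F(\lambda)\}$. $\|\cdot\|$ is the Euclidean norm. *)

theory Defs
  imports "HOL-Analysis.Analysis"
begin

text \<open>Transition kernel: P act i j = probability of moving from state i to state j under action act.\<close>
definition is_mdp :: "('act::finite \<Rightarrow> 's::finite \<Rightarrow> 's \<Rightarrow> real) \<Rightarrow> ('s \<Rightarrow> real) \<Rightarrow> real \<Rightarrow> bool" where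
  "is_mdp P xi gamma \<longleftrightarrow>
     (\<forall>a i j. 0 \<le> P a i j) \<and> (\<forall>a i. (\<Sum>j\<in>UNIV. P a i j) = 1) \<and>
     (\<forall>s. 0 \<le> xi s) \<and> (\<Sum>s\<in>UNIV. xi s) = 1 \<and> 0 < gamma \<and> gamma < 1"

definition is_policy :: "('s::finite \<Rightarrow> 'act::finite \<Rightarrow> real) \<Rightarrow> bool" where
  "is_policy pol \<longleftrightarrow> (\<forall>s a. 0 \<le> pol s a) \<and> (\<forall>s. (\<Sum>a\<in>UNIV. pol s a) = 1)"

fun state_dist :: "('act::finite \<Rightarrow> 's::finite \<Rightarrow> 's \<Rightarrow> real) \<Rightarrow> ('s \<Rightarrow> real) \<Rightarrow>
    ('s \<Rightarrow> 'act \<Rightarrow> real) \<Rightarrow> nat \<Rightarrow> 's \<Rightarrow> real" where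
  "state_dist P xi pol 0 s = xi s"
| "state_dist P xi pol (Suc t) s =
     (\<Sum>i\<in>UNIV. \<Sum>a\<in>UNIV. state_dist P xi pol t i * pol i a * P a i s)"

definition occupancy :: "('act::finite \<Rightarrow> 's::finite \<Rightarrow> 's \<Rightarrow> real) \<Rightarrow> ('s \<Rightarrow> real) \<Rightarrow> real \<Rightarrow>
    ('s \<Rightarrow> 'act \<Rightarrow> real) \<Rightarrow> real ^ ('s \<times> 'act)" where
  "occupancy P xi gamma pol =
     (\<chi> sa. \<Sum>t. gamma ^ t * state_dist P xi pol t (fst sa) * pol (fst sa) (snd sa))"

definition concave_ereal :: "('v::real_vector \<Rightarrow> ereal) \<Rightarrow> bool" where
  "concave_ereal F \<longleftrightarrow> convex {(x, r::real). ereal r \<le> F x}"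

definition proper_concave :: "('v::real_vector \<Rightarrow> ereal) \<Rightarrow> bool" where
  "proper_concave F \<longleftrightarrow> concave_ereal F \<and> (\<forall>x. F x \<noteq> \<infinity>) \<and> (\<exists>x. F x \<noteq> -\<infinity>)"

definition usc_ereal :: "('v::topological_space \<Rightarrow> ereal) \<Rightarrow> bool" where
  "usc_ereal F \<longleftrightarrow> (\<forall>x. Limsup (at x) F \<le> F x)"

definition fenchel_dual :: "('v::real_inner \<Rightarrow> ereal) \<Rightarrow> 'v \<Rightarrow> ereal" where
  "fenchel_dual F z = (INF l. ereal (inner l z) - F l)"

definition grad :: "('v::real_inner \<Rightarrow> real) \<Rightarrow> 'v \<Rightarrow> 'v" where
  "grad f x = (THE D. GDERIV f x :> D)"

end

theory Submission imports Defs begin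

text \<open>
  Write \<open>\<Lambda> = \<lambda>(\<theta>)\<close>, \<open>L\<close> for the derivative of \<open>\<lambda>\<close> at \<open>\<theta>\<close> and
  \<open>D = \<nabla>F(\<Lambda>)\<close>. Since \<open>\<nabla>\<^sub>\<theta>V(\<theta>;z) = L\<^sup>T z\<close>, the objective is
  \<open>\<Phi>\<^sub>\<delta>(x) = inf\<^sub>z (\<langle>z, \<Lambda> + \<delta> L x\<rangle> - F\<^sup>*(z)) - \<delta>/2 \<parallel>x\<parallel>\<^sup>2\<close>, an infimum of affine
  functions minus a strongly concave quadratic; its superlevel sets are closed and it is
  strongly concave, so it has a unique maximiser \<open>X\<^sub>\<delta>\<close>. Fenchel-Young gives
  \<open>\<Phi>\<^sub>\<delta>(x) \<ge> F(\<Lambda> + \<delta> L x) - \<delta>/2 \<parallel>x\<parallel>\<^sup>2\<close>; taking \<open>z = D\<close>, where concavity forces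
  \<open>F\<^sup>*(D) = \<langle>\<Lambda>, D\<rangle> - F(\<Lambda>)\<close>, gives \<open>\<Phi>\<^sub>\<delta>(x) \<le> F(\<Lambda>) + \<delta>\<langle>g, x\<rangle> - \<delta>/2 \<parallel>x\<parallel>\<^sup>2\<close>
  with \<open>g = L\<^sup>T D = \<nabla>R(\<theta>)\<close>. Comparing the bounds at \<open>g\<close> and at \<open>X\<^sub>\<delta>\<close> yields
  \<open>\<parallel>X\<^sub>\<delta> - g\<parallel>\<^sup>2 \<le> 2\<parallel>g\<parallel>\<^sup>2 - 2 (F(\<Lambda> + \<delta> L g) - F(\<Lambda>))/\<delta> \<rightarrow> 0\<close>.
\<close>

lemma grad_eqI:
  fixes f :: "'v::real_inner \<Rightarrow> real"
  assumes "GDERIV f x :> D"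
  shows "grad f x = D"
  unfolding grad_def
proof (rule the_equality)
  fix D' assume "GDERIV f x :> D'"
  with assms have "(\<lambda>h. inner h D) = (\<lambda>h. inner h D')"
    unfolding gderiv_def by (rule has_derivative_unique)
  then show "D' = D" by (metis vector_eq_ldot)
qed (fact assms)

lemma GDERIV_compose_adjoint:
  fixes lam :: "'a::euclidean_space \<Rightarrow> 'b::euclidean_space"
  assumes "GDERIV f (lam x) :> D" and "(lam has_derivative L) (at x)"
  shows "GDERIV (\<lambda>t. f (lam t)) x :> adjoint L D"
proof -
  have "((\<lambda>t. f (lam t)) has_derivative (\<lambda>h. inner (L h) D)) (at x)"
    using diff_chain_at[OF assms(2)] assms(1) unfolding gderiv_def o_def by blast
  then show ?thesis
    unfolding gderiv_def by (simp add: adjoint_works[OF has_derivative_linear[OF assms(2)]])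
qed

lemma GDERIV_inner_adjoint:
  fixes lam :: "'a::euclidean_space \<Rightarrow> 'b::euclidean_space"
  assumes "(lam has_derivative L) (at x)"
  shows "GDERIV (\<lambda>t. inner z (lam t)) x :> adjoint L z"
proof -
  have "GDERIV (\<lambda>y. inner z y) (lam x) :> z"
    unfolding gderiv_def by (auto intro!: derivative_eq_intros simp: inner_commute)
  then show ?thesis using GDERIV_compose_adjoint[OF _ assms] by blast
qed

lemma GDERIV_directional_tendsto:
  fixes f :: "'v::real_inner \<Rightarrow> real"
  assumes "GDERIV f x :> D"
  shows "((\<lambda>t. (f (x + t *\<^sub>R d) - f x) / t) \<longlongrightarrow> inner d D) (at_right 0)"
proof -
  have "((\<lambda>t. x + t *\<^sub>R d) has_derivative (\<lambda>t. t *\<^sub>R d)) (at 0)"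
    by (auto intro!: derivative_eq_intros)
  from diff_chain_at[OF this, of f "\<lambda>h. inner h D"] assms
  have "((\<lambda>t. f (x + t *\<^sub>R d)) has_derivative (\<lambda>t. inner (t *\<^sub>R d) D)) (at 0)"
    by (simp add: gderiv_def o_def)
  moreover have "(\<lambda>t. inner (t *\<^sub>R d) D) = (*) (inner d D)"
    by (simp add: fun_eq_iff)
  ultimately have "((\<lambda>t. f (x + t *\<^sub>R d)) has_real_derivative inner d D) (at 0)"
    unfolding has_field_derivative_def by simp
  then have "((\<lambda>t. (f (x + t *\<^sub>R d) - f x) / t) \<longlongrightarrow> inner d D) (at 0)"
    unfolding DERIV_def by simp
  then show ?thesis by (rule tendsto_mono[OF at_le, rotated]) simp
qed

lemma eventually_at_right_ray_in_open:
  fixes x :: "'v::real_normed_vector"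
  assumes "open U" "x \<in> U"
  shows "\<forall>\<^sub>F t in at_right 0. x + t *\<^sub>R d \<in> U"
proof -
  have "((\<lambda>t. x + t *\<^sub>R d) \<longlongrightarrow> x) (at_right (0::real))"
    by (auto intro!: tendsto_eq_intros)
  then show ?thesis using assms topological_tendstoD by blast
qed

lemma concave_ereal_le_tangent:
  fixes F :: "'v::real_inner \<Rightarrow> ereal"
  assumes conc: "concave_ereal F" and U: "open U" "x \<in> U" and fin: "\<forall>y\<in>U. \<bar>F y\<bar> \<noteq> \<infinity>"
    and D: "GDERIV (\<lambda>w. real_of_ereal (F w)) x :> D" and nl: "F l \<noteq> \<infinity>"
  shows "F l \<le> ereal (real_of_ereal (F x) + inner (l - x) D)"
proof (cases "F l")
  case (real r)
  define fx where "fx = real_of_ereal (F x)"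
  have Fx: "F x = ereal fx" using fin U unfolding fx_def by (cases "F x") auto
  have chord: "ereal (fx + t * (r - fx)) \<le> F (x + t *\<^sub>R (l - x))" if "0 \<le> t" "t \<le> 1" for t
  proof -
    have "(1 - t) *\<^sub>R (x, fx) + t *\<^sub>R (l, r) \<in> {(x, r::real). ereal r \<le> F x}"
      using conc Fx real that unfolding concave_ereal_def convex_def by auto
    moreover have "(1 - t) *\<^sub>R (x, fx) + t *\<^sub>R (l, r) = (x + t *\<^sub>R (l - x), fx + t * (r - fx))"
      by (simp add: algebra_simps)
    ultimately show ?thesis by simp
  qed
  have "\<forall>\<^sub>F t in at_right (0::real). t < 1"
    unfolding eventually_at_right_field by (intro exI[of _ 1]) auto
  then have "\<forall>\<^sub>F t in at_right 0. r - fx \<le> (real_of_ereal (F (x + t *\<^sub>R (l - x))) - real_of_ereal (F x)) / t"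
    using eventually_at_right_ray_in_open[OF U, of "l - x"] eventually_at_right_less
  proof eventually_elim
    case (elim t)
    then obtain v where v: "F (x + t *\<^sub>R (l - x)) = ereal v"
      using fin by (cases "F (x + t *\<^sub>R (l - x))") auto
    then have "t * (r - fx) \<le> v - fx" using chord[of t] elim by simp
    then show ?case using v Fx elim by (simp add: field_simps)
  qed
  then have "r - fx \<le> inner (l - x) D"
    using tendsto_lowerbound[OF GDERIV_directional_tendsto[OF D]] by simp
  then show ?thesis using real unfolding fx_def by simp
qed (use nl in auto)

lemma fenchel_dual_le: "fenchel_dual F z \<le> ereal (inner y z) - F y"
  unfolding fenchel_dual_def by (rule INF_lower) simp

lemma fenchel_young:
  assumes "\<bar>F y\<bar> \<noteq> \<infinity>"
  shows "F y \<le> ereal (inner z y) - fenchel_dual F z"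
  using fenchel_dual_le[of F z y] assms by (cases "F y"; cases "fenchel_dual F z") (auto simp: inner_commute)

lemma fenchel_dual_at_gradient:
  fixes F :: "'v::real_inner \<Rightarrow> ereal"
  assumes "proper_concave F" and U: "open U" "x \<in> U" and fin: "\<forall>y\<in>U. \<bar>F y\<bar> \<noteq> \<infinity>"
    and D: "GDERIV (\<lambda>w. real_of_ereal (F w)) x :> D"
  shows "fenchel_dual F D = ereal (inner x D - real_of_ereal (F x))"
proof (rule antisym)
  have "\<bar>F x\<bar> \<noteq> \<infinity>" using fin U by auto
  then show "fenchel_dual F D \<le> ereal (inner x D - real_of_ereal (F x))"
    using fenchel_dual_le[of F D x] by (cases "F x") auto
  show "ereal (inner x D - real_of_ereal (F x)) \<le> fenchel_dual F D"
    unfolding fenchel_dual_def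
  proof (rule INF_greatest)
    fix l
    have "F l \<noteq> \<infinity>" using assms(1) unfolding proper_concave_def by blast
    moreover have "F l \<le> ereal (real_of_ereal (F x) + inner (l - x) D)"
      using concave_ereal_le_tangent[OF _ U fin D] assms(1) calculation
      unfolding proper_concave_def by blast
    ultimately show "ereal (inner x D - real_of_ereal (F x)) \<le> ereal (inner l D) - F l"
      by (cases "F l") (auto simp: inner_diff_left)
  qed
qed

lemma ereal_closed_superlevel_attains_max:
  fixes f :: "'a::topological_space \<Rightarrow> ereal"
  assumes closed: "\<And>c. closed {x. ereal c \<le> f x}" and "compact K" "x0 \<in> K"
    and outside: "\<And>y. y \<notin> K \<Longrightarrow> f y \<le> f x0"
  shows "\<exists>x. \<forall>y. f y \<le> f x"
proof -
  define M where "M = (SUP y\<in>K. f y)"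
  have "K \<inter> (\<Inter>c\<in>{c. ereal c < M}. {x. ereal c \<le> f x}) \<noteq> {}"
  proof (rule compact_imp_fip_image[OF \<open>compact K\<close>])
    show "closed {x. ereal c \<le> f x}" for c by (rule closed)
  next
    fix C assume C: "finite C" "C \<subseteq> {c. ereal c < M}"
    show "K \<inter> (\<Inter>c\<in>C. {x. ereal c \<le> f x}) \<noteq> {}"
    proof (cases "C = {}")
      case False
      then have "Max C \<in> C" using C(1) by (intro Max_in)
      then have "ereal (Max C) < M" using C(2) by blast
      then obtain x where "x \<in> K" "ereal (Max C) < f x" unfolding M_def less_SUP_iff by blast
      moreover have "ereal c \<le> f x" if "c \<in> C" for c
      proof -
        have "ereal c \<le> ereal (Max C)" using Max_ge[OF C(1) that] by simp
        also have "\<dots> \<le> f x" using \<open>ereal (Max C) < f x\<close> by simp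
        finally show ?thesis .
      qed
      ultimately show ?thesis by blast
    qed (use \<open>x0 \<in> K\<close> in auto)
  qed
  then obtain x where "x \<in> K" and x: "\<And>c. ereal c < M \<Longrightarrow> ereal c \<le> f x" by auto
  have "M \<le> f x"
  proof (rule ccontr)
    assume "\<not> M \<le> f x"
    then have "f x < M" by (simp add: not_le)
    from ereal_dense2[OF this] obtain c where c: "f x < ereal c" "ereal c < M" by blast
    show False using x[OF c(2)] c(1) by simp
  qed
  moreover have "f y \<le> M" if "y \<in> K" for y unfolding M_def using that by (rule SUP_upper)
  ultimately show ?thesis
    using outside \<open>x0 \<in> K\<close> by (metis order_trans)
qed

text \<open>With \<open>a z = \<langle>z, \<Lambda>\<rangle> - F\<^sup>*(z)\<close> and \<open>b z = \<delta> L\<^sup>T z\<close> this is the objective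
  \<open>\<Phi>\<^sub>\<delta>\<close>; \<open>a z = \<infinity>\<close> is allowed (where \<open>F\<^sup>*(z) = -\<infinity>\<close>).\<close>

definition penalized_affine_inf :: "('z \<Rightarrow> ereal) \<Rightarrow> ('z \<Rightarrow> 'a::real_inner) \<Rightarrow> real \<Rightarrow> 'a \<Rightarrow> ereal" where
  "penalized_affine_inf a b k x = (INF z. a z + ereal (inner (b z) x - k / 2 * (norm x)\<^sup>2))"

lemma closed_superlevel_penalized_affine_inf:
  "closed {x. ereal c \<le> penalized_affine_inf a b k x}"
proof -
  have "closed {x. ereal c \<le> a z + ereal (inner (b z) x - k / 2 * (norm x)\<^sup>2)}" for z
  proof (cases "a z")
    case (real r)
    have "continuous_on UNIV (\<lambda>x. r + (inner (b z) x - k / 2 * (norm x)\<^sup>2))"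
      by (intro continuous_intros)
    from closed_Collect_le[OF continuous_on_const this, of c] real show ?thesis
      by simp
  qed simp_all
  moreover have "{x. ereal c \<le> penalized_affine_inf a b k x}
      = (\<Inter>z. {x. ereal c \<le> a z + ereal (inner (b z) x - k / 2 * (norm x)\<^sup>2)})"
    unfolding penalized_affine_inf_def by (auto simp: le_INF_iff)
  ultimately show ?thesis by auto
qed

lemma penalized_affine_inf_attains_max:
  fixes b :: "'z \<Rightarrow> 'a::euclidean_space"
  assumes "k > 0" and min: "\<And>z. a u \<le> a z"
  shows "\<exists>x. \<forall>y. penalized_affine_inf a b k y \<le> penalized_affine_inf a b k x"
proof (rule ereal_closed_superlevel_attains_max[OF closed_superlevel_penalized_affine_inf])
  let ?K = "cball (0::'a) (2 * norm (b u) / k)"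
  show "compact ?K" by (rule compact_cball)
  show "0 \<in> ?K" using \<open>k > 0\<close> by simp
  fix y assume "y \<notin> ?K"
  then have "norm (b u) \<le> k / 2 * norm y" using \<open>k > 0\<close> by (simp add: field_simps)
  then have "norm (b u) * norm y \<le> k / 2 * (norm y)\<^sup>2"
    by (metis mult.assoc mult_right_mono norm_ge_zero power2_eq_square)
  then have "inner (b u) y - k / 2 * (norm y)\<^sup>2 \<le> 0"
    using norm_cauchy_schwarz[of "b u" y] by linarith
  then have "a u + ereal (inner (b u) y - k / 2 * (norm y)\<^sup>2) \<le> a u"
    by (cases "a u") auto
  moreover have "penalized_affine_inf a b k y \<le> a u + ereal (inner (b u) y - k / 2 * (norm y)\<^sup>2)"
    unfolding penalized_affine_inf_def by (rule INF_lower) simp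
  moreover have "a u \<le> penalized_affine_inf a b k 0"
    unfolding penalized_affine_inf_def by (simp add: min le_INF_iff)
  ultimately show "penalized_affine_inf a b k y \<le> penalized_affine_inf a b k 0" by order
qed

lemma affine_minus_sq_midpoint:
  fixes x y b :: "'a::real_inner"
  shows "inner b (midpoint x y) - k / 2 * (norm (midpoint x y))\<^sup>2
    = ((inner b x - k / 2 * (norm x)\<^sup>2) + (inner b y - k / 2 * (norm y)\<^sup>2)) / 2
      + k / 8 * (norm (x - y))\<^sup>2"
  unfolding midpoint_def
  by (simp add: power2_norm_eq_inner inner_add_left inner_add_right inner_diff_left inner_diff_right
      inner_commute algebra_simps) (simp add: field_simps)

lemma penalized_affine_inf_argmax_unique:
  assumes "k > 0"
    and max1: "\<forall>y. penalized_affine_inf a b k y \<le> penalized_affine_inf a b k x1"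
    and max2: "\<forall>y. penalized_affine_inf a b k y \<le> penalized_affine_inf a b k x2"
    and fin: "\<bar>penalized_affine_inf a b k x1\<bar> \<noteq> \<infinity>"
  shows "x1 = x2"
proof -
  let ?f = "penalized_affine_inf a b k"
  let ?q = "\<lambda>z x. inner (b z) x - k / 2 * (norm x)\<^sup>2"
  let ?e = "k / 8 * (norm (x1 - x2))\<^sup>2"
  have "?f x1 = ?f x2" using max1 max2 by (simp add: antisym)
  then obtain m where m1: "?f x1 = ereal m" and m2: "?f x2 = ereal m"
    using fin by (cases "?f x1") auto
  have "ereal (m + ?e) \<le> ?f (midpoint x1 x2)"
    unfolding penalized_affine_inf_def
  proof (rule INF_greatest)
    fix z
    have "?f x \<le> a z + ereal (?q z x)" for x
      unfolding penalized_affine_inf_def by (rule INF_lower) simp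
    then have le1: "ereal m \<le> a z + ereal (?q z x1)" and le2: "ereal m \<le> a z + ereal (?q z x2)"
      using m1 m2 by metis+
    show "ereal (m + ?e) \<le> a z + ereal (?q z (midpoint x1 x2))"
    proof (cases "a z")
      case (real r)
      have "?q z (midpoint x1 x2) = (?q z x1 + ?q z x2) / 2 + ?e"
        by (rule affine_minus_sq_midpoint)
      moreover have "m \<le> r + ?q z x1" "m \<le> r + ?q z x2" using le1 le2 real by simp_all
      ultimately have "m + ?e \<le> r + ?q z (midpoint x1 x2)" by argo
      then show ?thesis using real by simp
    qed (use le1 in simp_all)
  qed
  also have "\<dots> \<le> ereal m" using max1 m1 by metis
  finally have "?e \<le> 0" by simp
  then show ?thesis using \<open>k > 0\<close> by (simp add: mult_le_0_iff)
qed

lemma penalized_affine_inf_unique_argmax: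
  fixes b :: "'z \<Rightarrow> 'a::euclidean_space"
  assumes "k > 0" and fin: "\<bar>a u\<bar> \<noteq> \<infinity>" and min: "\<And>z. a u \<le> a z"
  shows "\<exists>!x. \<forall>y. penalized_affine_inf a b k y \<le> penalized_affine_inf a b k x"
proof -
  let ?f = "penalized_affine_inf a b k"
  obtain x where x: "\<forall>y. ?f y \<le> ?f x"
    using penalized_affine_inf_attains_max[where a = a and u = u, OF \<open>k > 0\<close> min] by blast
  obtain r where r: "a u = ereal r" using fin by (cases "a u") auto
  have "ereal r \<le> ?f 0"
    unfolding penalized_affine_inf_def using min r by (simp add: le_INF_iff)
  also have "\<dots> \<le> ?f x" using x by blast
  finally have lo: "ereal r \<le> ?f x" .
  have "?f x \<le> a u + ereal (inner (b u) x - k / 2 * (norm x)\<^sup>2)"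
    unfolding penalized_affine_inf_def by (rule INF_lower) simp
  with lo r have "\<bar>?f x\<bar> \<noteq> \<infinity>" by (cases "?f x") auto
  show ?thesis
  proof (rule ex1I[of _ x])
    show "\<forall>y. ?f y \<le> ?f x" by (fact x)
    fix x' assume "\<forall>y. ?f y \<le> ?f x'"
    then show "x' = x"
      using penalized_affine_inf_argmax_unique[OF \<open>k > 0\<close> x _ \<open>\<bar>?f x\<bar> \<noteq> \<infinity>\<close>] by simp
  qed
qed

lemma tendsto_at_right_of_quadratic_sandwich:
  fixes X :: "real \<Rightarrow> 'a::real_inner"
  assumes lim: "((\<lambda>\<delta>. (r \<delta> - c) / \<delta>) \<longlongrightarrow> (norm g)\<^sup>2) (at_right 0)"
    and le: "\<forall>\<^sub>F \<delta> in at_right 0.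
      r \<delta> - \<delta> / 2 * (norm g)\<^sup>2 \<le> c + \<delta> * inner g (X \<delta>) - \<delta> / 2 * (norm (X \<delta>))\<^sup>2"
  shows "(X \<longlongrightarrow> g) (at_right 0)"
proof -
  let ?u = "\<lambda>\<delta>. 2 * ((norm g)\<^sup>2 - (r \<delta> - c) / \<delta>)"
  have arith: "S \<le> 2 * (N - A)" if "A - N / 2 \<le> I - Q / 2" "S = Q - 2 * I + N" for A N I Q S :: real
    using that by argo
  have upper: "\<forall>\<^sub>F \<delta> in at_right 0. (norm (X \<delta> - g))\<^sup>2 \<le> ?u \<delta>"
    using le eventually_at_right_less
  proof eventually_elim
    case (elim \<delta>)
    have "(r \<delta> - c) / \<delta> - (norm g)\<^sup>2 / 2 \<le> inner g (X \<delta>) - (norm (X \<delta>))\<^sup>2 / 2"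
      using elim by (simp add: field_simps)
    moreover have "(norm (X \<delta> - g))\<^sup>2 = (norm (X \<delta>))\<^sup>2 - 2 * inner g (X \<delta>) + (norm g)\<^sup>2"
      by (simp add: power2_norm_eq_inner inner_diff_left inner_diff_right inner_commute)
    ultimately show ?case by (rule arith)
  qed
  have "(?u \<longlongrightarrow> 0) (at_right 0)"
    using tendsto_mult_left[OF tendsto_diff[OF tendsto_const lim], of 2 "(norm g)\<^sup>2"] by simp
  then have "((\<lambda>\<delta>. (norm (X \<delta> - g))\<^sup>2) \<longlongrightarrow> 0) (at_right 0)"
    using tendsto_sandwich[OF always_eventually upper tendsto_const] by simp
  then have "((\<lambda>\<delta>. sqrt ((norm (X \<delta> - g))\<^sup>2)) \<longlongrightarrow> sqrt 0) (at_right 0)"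
    by (rule tendsto_real_sqrt)
  then show ?thesis by (simp add: tendsto_norm_zero_iff LIM_zero_iff)
qed

lemma value_objective_eq_penalized_affine_inf:
  fixes lam :: "'a::euclidean_space \<Rightarrow> 'b::euclidean_space"
  assumes "(lam has_derivative L) (at \<theta>)" and "\<forall>z. fenchel_dual F z \<noteq> \<infinity>"
  shows "(INF z. ereal (inner z (lam \<theta>)) + ereal (\<delta> * inner (grad (\<lambda>t. inner z (lam t)) \<theta>) x)
        - fenchel_dual F z - ereal (\<delta> / 2 * (norm x)\<^sup>2))
    = penalized_affine_inf (\<lambda>z. ereal (inner z (lam \<theta>)) - fenchel_dual F z) (\<lambda>z. \<delta> *\<^sub>R adjoint L z) \<delta> x"
proof -
  have grad: "grad (\<lambda>t. inner z (lam t)) \<theta> = adjoint L z" for z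
    by (rule grad_eqI[OF GDERIV_inner_adjoint[OF assms(1)]])
  show ?thesis
    unfolding penalized_affine_inf_def
  proof (rule INF_cong[OF refl])
    fix z
    have "fenchel_dual F z \<noteq> \<infinity>" using assms(2) by blast
    then show "ereal (inner z (lam \<theta>)) + ereal (\<delta> * inner (grad (\<lambda>t. inner z (lam t)) \<theta>) x)
        - fenchel_dual F z - ereal (\<delta> / 2 * (norm x)\<^sup>2)
      = ereal (inner z (lam \<theta>)) - fenchel_dual F z
        + ereal (inner (\<delta> *\<^sub>R adjoint L z) x - \<delta> / 2 * (norm x)\<^sup>2)"
      unfolding grad by (cases "fenchel_dual F z") auto
  qed
qed

lemma penalized_affine_inf_fenchel_lower_bound:
  fixes L :: "'a::euclidean_space \<Rightarrow> 'b::euclidean_space"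
  assumes "linear L" and "F (y + \<delta> *\<^sub>R L x) = ereal v"
  shows "ereal (v - \<delta> / 2 * (norm x)\<^sup>2)
    \<le> penalized_affine_inf (\<lambda>z. ereal (inner z y) - fenchel_dual F z) (\<lambda>z. \<delta> *\<^sub>R adjoint L z) \<delta> x"
  unfolding penalized_affine_inf_def
proof (rule INF_greatest)
  fix z
  have "inner (y + \<delta> *\<^sub>R L x) z = inner z y + inner (\<delta> *\<^sub>R adjoint L z) x"
    by (simp add: inner_add_left adjoint_clauses(2)[OF \<open>linear L\<close>] inner_commute[of z y]
        inner_commute[of z "L x"])
  then have "fenchel_dual F z \<le> ereal (inner z y + inner (\<delta> *\<^sub>R adjoint L z) x - v)"
    using fenchel_dual_le[of F z "y + \<delta> *\<^sub>R L x"] assms(2) by simp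
  then show "ereal (v - \<delta> / 2 * (norm x)\<^sup>2)
      \<le> ereal (inner z y) - fenchel_dual F z + ereal (inner (\<delta> *\<^sub>R adjoint L z) x - \<delta> / 2 * (norm x)\<^sup>2)"
    by (cases "fenchel_dual F z") auto
qed

lemma penalized_affine_inf_argmax_tendsto_adjoint:
  fixes L :: "'a::euclidean_space \<Rightarrow> 'b::euclidean_space" and X :: "real \<Rightarrow> 'a"
    and F :: "'b \<Rightarrow> ereal" and \<Lambda> :: 'b
  defines "\<phi> \<equiv> \<lambda>\<delta>. penalized_affine_inf (\<lambda>z. ereal (inner z \<Lambda>) - fenchel_dual F z) (\<lambda>z. \<delta> *\<^sub>R adjoint L z) \<delta>"
  assumes "linear L" and F: "proper_concave F" and U: "open U" "\<Lambda> \<in> U" "\<forall>y\<in>U. \<bar>F y\<bar> \<noteq> \<infinity>"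
    and D: "GDERIV (\<lambda>w. real_of_ereal (F w)) \<Lambda> :> D"
    and X: "\<And>\<delta>. \<delta> > 0 \<Longrightarrow> \<forall>y. \<phi> \<delta> y \<le> \<phi> \<delta> (X \<delta>)"
  shows "(X \<longlongrightarrow> adjoint L D) (at_right 0)"
proof (rule tendsto_at_right_of_quadratic_sandwich)
  let ?g = "adjoint L D" and ?f = "\<lambda>w. real_of_ereal (F w)"
  have "inner (L ?g) D = (norm ?g)\<^sup>2"
    by (simp add: adjoint_works[OF \<open>linear L\<close>, symmetric] power2_norm_eq_inner)
  then show "((\<lambda>\<delta>. (?f (\<Lambda> + \<delta> *\<^sub>R L ?g) - ?f \<Lambda>) / \<delta>) \<longlongrightarrow> (norm ?g)\<^sup>2) (at_right 0)"
    using GDERIV_directional_tendsto[OF D, of "L ?g"] by simp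
  have upper: "\<phi> \<delta> x \<le> ereal (?f \<Lambda> + \<delta> * inner ?g x - \<delta> / 2 * (norm x)\<^sup>2)" for \<delta> x
  proof -
    have "\<phi> \<delta> x \<le> ereal (inner D \<Lambda>) - fenchel_dual F D + ereal (inner (\<delta> *\<^sub>R ?g) x - \<delta> / 2 * (norm x)\<^sup>2)"
      unfolding \<phi>_def penalized_affine_inf_def by (rule INF_lower) simp
    then show ?thesis
      by (simp add: fenchel_dual_at_gradient[OF F U D] inner_commute add_diff_eq)
  qed
  show "\<forall>\<^sub>F \<delta> in at_right 0. ?f (\<Lambda> + \<delta> *\<^sub>R L ?g) - \<delta> / 2 * (norm ?g)\<^sup>2
      \<le> ?f \<Lambda> + \<delta> * inner ?g (X \<delta>) - \<delta> / 2 * (norm (X \<delta>))\<^sup>2"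
    using eventually_at_right_ray_in_open[OF U(1,2), of "L ?g"] eventually_at_right_less
  proof eventually_elim
    case (elim \<delta>)
    then obtain v where v: "F (\<Lambda> + \<delta> *\<^sub>R L ?g) = ereal v"
      using U(3) by (cases "F (\<Lambda> + \<delta> *\<^sub>R L ?g)") auto
    have "ereal (v - \<delta> / 2 * (norm ?g)\<^sup>2) \<le> \<phi> \<delta> ?g"
      unfolding \<phi>_def using \<open>linear L\<close> v by (rule penalized_affine_inf_fenchel_lower_bound)
    also have "\<dots> \<le> \<phi> \<delta> (X \<delta>)" using X elim(2) by blast
    also have "\<dots> \<le> ereal (?f \<Lambda> + \<delta> * inner ?g (X \<delta>) - \<delta> / 2 * (norm (X \<delta>))\<^sup>2)"
      by (rule upper)
    finally show ?case using v by simp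
  qed
qed

theorem theorem1:
  fixes P :: "'act::finite \<Rightarrow> 's::finite \<Rightarrow> 's \<Rightarrow> real"
    and xi :: "'s \<Rightarrow> real"
    and gamma :: real
    and Theta :: "(real ^ 'd::finite) set"
    and pol :: "real ^ 'd \<Rightarrow> 's \<Rightarrow> 'act \<Rightarrow> real"
    and F :: "real ^ ('s \<times> 'act) \<Rightarrow> ereal"
    and \<theta> :: "real ^ 'd"
  defines "lam \<equiv> (\<lambda>t. occupancy P xi gamma (pol t))"
  defines "V \<equiv> (\<lambda>t z. inner z (lam t))"
  defines "R \<equiv> (\<lambda>t. F (lam t))"
  defines "obj \<equiv> (\<lambda>\<delta> x. INF z. ereal (V \<theta> z) + ereal (\<delta> * inner (grad (\<lambda>t. V t z) \<theta>) x)
                                 - fenchel_dual F z - ereal (\<delta> / 2 * (norm x)\<^sup>2))"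
  assumes mdp: "is_mdp P xi gamma"
    and convTheta: "convex Theta"
    and pols: "\<forall>t\<in>Theta. is_policy (pol t)"
    and int: "\<theta> \<in> interior Theta"
    and diff: "lam differentiable (at \<theta>)"
    and Fproper: "proper_concave F"
    and Fusc: "usc_ereal F"
    and Fsmooth: "\<exists>U g. open U \<and> lam \<theta> \<in> U \<and> (\<forall>y\<in>U. \<bar>F y\<bar> \<noteq> \<infinity>) \<and>
                     (\<forall>y\<in>U. GDERIV (\<lambda>w. real_of_ereal (F w)) y :> g y) \<and> continuous_on U g"
  shows "\<exists>gR. GDERIV (\<lambda>t. real_of_ereal (R t)) \<theta> :> gR \<and>
           (\<forall>\<delta>>0. \<exists>!x. \<forall>y. obj \<delta> y \<le> obj \<delta> x) \<and>
           ((\<lambda>\<delta>. THE x. \<forall>y. obj \<delta> y \<le> obj \<delta> x) \<longlongrightarrow> gR) (at_right 0)"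
proof -
  obtain L where L: "(lam has_derivative L) (at \<theta>)"
    using diff unfolding differentiable_def by blast
  obtain U gF where U: "open U" "lam \<theta> \<in> U" "\<forall>y\<in>U. \<bar>F y\<bar> \<noteq> \<infinity>"
    and dF: "\<forall>y\<in>U. GDERIV (\<lambda>w. real_of_ereal (F w)) y :> gF y"
    using Fsmooth by blast
  define D where "D = gF (lam \<theta>)"
  define a where "a = (\<lambda>z. ereal (inner z (lam \<theta>)) - fenchel_dual F z)"
  have D: "GDERIV (\<lambda>w. real_of_ereal (F w)) (lam \<theta>) :> D" using dF U(2) unfolding D_def by blast
  have finF: "\<bar>F (lam \<theta>)\<bar> \<noteq> \<infinity>" using U by auto
  have a_min: "a D = F (lam \<theta>)" "F (lam \<theta>) \<le> a z" for z
    using fenchel_dual_at_gradient[OF Fproper U D] fenchel_young[of F "lam \<theta>" z, OF finF] finF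
    unfolding a_def by (auto simp: inner_commute)
  have "fenchel_dual F z \<noteq> \<infinity>" for z
    using fenchel_young[of F "lam \<theta>" z, OF finF] finF by auto
  then have obj: "obj \<delta> = penalized_affine_inf a (\<lambda>z. \<delta> *\<^sub>R adjoint L z) \<delta>" for \<delta>
    unfolding obj_def V_def a_def by (intro ext value_objective_eq_penalized_affine_inf[OF L]) blast
  have argmax: "\<forall>\<delta>>0. \<exists>!x. \<forall>y. obj \<delta> y \<le> obj \<delta> x"
    unfolding obj using a_min finF
    by (intro allI impI penalized_affine_inf_unique_argmax[where u = D]) simp_all
  define X where "X = (\<lambda>\<delta>. THE x. \<forall>y. obj \<delta> y \<le> obj \<delta> x)"
  have "\<forall>y. obj \<delta> y \<le> obj \<delta> (X \<delta>)" if "\<delta> > 0" for \<delta>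
    unfolding X_def by (rule theI') (use argmax that in blast)
  then have "(X \<longlongrightarrow> adjoint L D) (at_right 0)"
    using penalized_affine_inf_argmax_tendsto_adjoint[OF has_derivative_linear[OF L] Fproper U D, of X]
    unfolding obj a_def by blast
  moreover have "GDERIV (\<lambda>t. real_of_ereal (R t)) \<theta> :> adjoint L D"
    unfolding R_def by (rule GDERIV_compose_adjoint[OF D L])
  ultimately show ?thesis
    using argmax unfolding X_def by blast
qed

end
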